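(* Let $A$ be a semi-directed cycle in the dependency graph $N^\star$ of a TCP-net $N$. Then $A$ is conditionally acyclic if $A$ contains a pair of distinct ci-arcs $\gamma_i,\gamma_j$ such that either (a) $A$ contains directed edges, and for every assignment $w$ to $S(\gamma_i)\cap S(\gamma_j)$, at least one of $\gamma_i,\gamma_j$ is oriented by $w$ in the direction opposite to the direction of $A$; or (b) all edges of $A$ are undirected (ci-arcs), and for every assignment $w$ to $S(\gamma_i)\cap S(\gamma_j)$, $\gamma_i$ and $\gamma_j$ are oriented by $w$ in opposite directions with respect to $A$.
   Context: Variables $V$ have finite nonempty domains $D(X)$; $D(U)$ denotes the set of assignments to $U\subseteq V$. A TCP-net is a tuple $N=\langle V,\mathsf{cp},\mathsf{i},\mathsf{ci},\mathsf{cpt},\mathsf{cit}\rangle$ where: $\mathsf{cp}$ is a set of directed cp-arcs $(X,Y)$ between distinct variables; $\mathsf{i}$ is a set of directed i-arcs $(X,Y)$ between distinct variables; $\mathsf{ci}$ is a set of undirected ci-arcs $\{X,Y\}$ between distinct variables, each with a nonempty selector set $S(X,Y)\subseteq V\setminus\{X,Y\}$; $\mathsf{cpt}$ assigns to each variable $X$ a table mapping each assignment to its cp-parents to a strict partial order on $D(X)$; $\mathsf{cit}$ assigns to each ci-arc $\gamma=\{X,Y\}$ a table $CIT(\gamma)$, a possibly partial map from $D(S(X,Y))$ (its rows) to $\{X\rhd Y,\ Y\rhd X\}$; an entry $X\rhd Y$ is read as orienting $\gamma$ from $X$ to $Y$. The dependency graph $N^\star$ has vertex set $V$, the cp-arcs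 and i-arcs as directed edges, the ci-arcs as undirected edges, and additionally, for every ci-arc $\{X_i,X_j\}$ and every $X_k\in S(X_i,X_j)$, the directed edges $(X_k,X_i)$ and $(X_k,X_j)$ (if not already present). A semi-directed cycle of $N^\star$ is a set $A$ of edges of $N^\star$ such that: the underlying undirected (multi)graph of $A$ is a simple cycle (connected, every vertex of degree 2); not all edges of $A$ are directed; and all directed edges of $A$ point the same way around the cycle — this common way is called the direction of $A$. Let $S(A)$ be the union of the selector sets of the ci-arcs in $A$. $A$ is conditionally directed if there is an assignment to $S(A)$ under which every ci-arc of $A$ receives a CIT entry and the resulting orientations, together with the directed edges of $A$, make $A$ a directed cycle; otherwise $A$ is conditionally acyclic. For a ci-arc $\gamma=\{X,Y\}$ and an assignment $w$ to a subset of $S(\gamma)$, $w$ orients $\gamma$ (in a given direction) if all defined rows of $CIT(\gamma)$ consistent with $w$ express the same relative importance between $X$ and $Y$ (that direction). *)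

theory Defs
  imports Main
begin

text \<open>An orientation X |> Y of a ci-arc {X,Y} is represented by the ordered pair (X,Y).\<close>

record ('v, 'd) tcpnet =
  vars  :: "'v set"
  dmn   :: "'v \<Rightarrow> 'd set"
  cp    :: "('v \<times> 'v) set"
  iarcs :: "('v \<times> 'v) set"
  ci    :: "'v set set"
  sel   :: "'v set \<Rightarrow> 'v set"
  cpt   :: "'v \<Rightarrow> ('v \<rightharpoonup> 'd) \<Rightarrow> ('d \<times> 'd) set"
  cit   :: "'v set \<Rightarrow> ('v \<rightharpoonup> 'd) \<Rightarrow> ('v \<times> 'v) option"

definition is_assignment :: "('v, 'd) tcpnet \<Rightarrow> 'v set \<Rightarrow> ('v \<rightharpoonup> 'd) \<Rightarrow> bool" where
  "is_assignment N U w \<longleftrightarrow> dom w = U \<and> (\<forall>x\<in>U. the (w x) \<in> dmn N x)"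

definition cp_parents :: "('v, 'd) tcpnet \<Rightarrow> 'v \<Rightarrow> 'v set" where
  "cp_parents N X = {Y. (Y, X) \<in> cp N}"

definition strict_po_on :: "'d set \<Rightarrow> ('d \<times> 'd) set \<Rightarrow> bool" where
  "strict_po_on D R \<longleftrightarrow> R \<subseteq> D \<times> D \<and> (\<forall>x. (x, x) \<notin> R) \<and> trans R"

definition tcp_net :: "('v, 'd) tcpnet \<Rightarrow> bool" where
  "tcp_net N \<longleftrightarrow>
     (\<forall>X\<in>vars N. finite (dmn N X) \<and> dmn N X \<noteq> {})
   \<and> cp N \<subseteq> vars N \<times> vars N \<and> (\<forall>(X, Y)\<in>cp N. X \<noteq> Y)
   \<and> iarcs N \<subseteq> vars N \<times> vars N \<and> (\<forall>(X, Y)\<in>iarcs N. X \<noteq> Y)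
   \<and> (\<forall>g\<in>ci N. \<exists>X Y. g = {X, Y} \<and> X \<noteq> Y \<and> X \<in> vars N \<and> Y \<in> vars N)
   \<and> (\<forall>g\<in>ci N. sel N g \<noteq> {} \<and> sel N g \<subseteq> vars N - g)
   \<and> (\<forall>X\<in>vars N. \<forall>p. is_assignment N (cp_parents N X) p \<longrightarrow> strict_po_on (dmn N X) (cpt N X p))
   \<and> (\<forall>g\<in>ci N. \<forall>r d. cit N g r = Some d \<longrightarrow>
        is_assignment N (sel N g) r \<and> (\<exists>X Y. g = {X, Y} \<and> d = (X, Y)))"

datatype 'v edge = Dir 'v 'v | Und "'v set"

fun ends :: "'v edge \<Rightarrow> 'v set" where
  "ends (Dir x y) = {x, y}"
| "ends (Und g) = g"

definition dep_edges :: "('v, 'd) tcpnet \<Rightarrow> 'v edge set" where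
  "dep_edges N =
     {Dir x y | x y. (x, y) \<in> cp N \<or> (x, y) \<in> iarcs N \<or> (\<exists>g\<in>ci N. y \<in> g \<and> x \<in> sel N g)}
     \<union> Und ` ci N"

definition verts :: "'v edge set \<Rightarrow> 'v set" where
  "verts A = (\<Union>e\<in>A. ends e)"

definition adj :: "'v edge set \<Rightarrow> ('v \<times> 'v) set" where
  "adj A = {(x, y). \<exists>e\<in>A. x \<in> ends e \<and> y \<in> ends e}"

definition simple_cycle :: "'v edge set \<Rightarrow> bool" where
  "simple_cycle A \<longleftrightarrow> finite A \<and> A \<noteq> {}
     \<and> (\<forall>v\<in>verts A. card {e\<in>A. v \<in> ends e} = 2)
     \<and> (\<forall>u\<in>verts A. \<forall>v\<in>verts A. (u, v) \<in> (adj A)\<^sup>*)"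

text \<open>A traversal of a cycle A (one of the two ways around it) assigns each edge a
  (tail, head) pair such that every vertex is tail of exactly one and head of
  exactly one edge.\<close>

definition is_traversal :: "'v edge set \<Rightarrow> ('v edge \<Rightarrow> 'v \<times> 'v) \<Rightarrow> bool" where
  "is_traversal A T \<longleftrightarrow>
     (\<forall>e\<in>A. \<exists>x y. T e = (x, y) \<and> ends e = {x, y} \<and> x \<noteq> y)
   \<and> (\<forall>v\<in>verts A. card {e\<in>A. fst (T e) = v} = 1 \<and> card {e\<in>A. snd (T e) = v} = 1)"

definition agrees_dir :: "'v edge set \<Rightarrow> ('v edge \<Rightarrow> 'v \<times> 'v) \<Rightarrow> bool" where
  "agrees_dir A T \<longleftrightarrow> (\<forall>x y. Dir x y \<in> A \<longrightarrow> T (Dir x y) = (x, y))"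

definition semi_directed_cycle :: "('v, 'd) tcpnet \<Rightarrow> 'v edge set \<Rightarrow> bool" where
  "semi_directed_cycle N A \<longleftrightarrow> A \<subseteq> dep_edges N \<and> simple_cycle A
     \<and> (\<exists>g. Und g \<in> A) \<and> (\<exists>T. is_traversal A T \<and> agrees_dir A T)"

definition selA :: "('v, 'd) tcpnet \<Rightarrow> 'v edge set \<Rightarrow> 'v set" where
  "selA N A = (\<Union>{sel N g | g. Und g \<in> A})"

definition cond_directed :: "('v, 'd) tcpnet \<Rightarrow> 'v edge set \<Rightarrow> bool" where
  "cond_directed N A \<longleftrightarrow> (\<exists>u. is_assignment N (selA N A) u
     \<and> (\<forall>g. Und g \<in> A \<longrightarrow> cit N g (u |` sel N g) \<noteq> None)
     \<and> (\<exists>T. is_traversal A T \<and> agrees_dir A T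
           \<and> (\<forall>g. Und g \<in> A \<longrightarrow> cit N g (u |` sel N g) = Some (T (Und g)))))"

definition cond_acyclic :: "('v, 'd) tcpnet \<Rightarrow> 'v edge set \<Rightarrow> bool" where
  "cond_acyclic N A \<longleftrightarrow> \<not> cond_directed N A"

definition orients :: "('v, 'd) tcpnet \<Rightarrow> 'v set \<Rightarrow> ('v \<rightharpoonup> 'd) \<Rightarrow> 'v \<times> 'v \<Rightarrow> bool" where
  "orients N g w d \<longleftrightarrow> (\<forall>r o'. cit N g r = Some o' \<and> w \<subseteq>\<^sub>m r \<longrightarrow> o' = d)"

end

theory Submission
  imports Defs
begin

text \<open>A traversal of a simple cycle is determined by its direction on a single edge: at a
  shared vertex the edge entering it forces the edge leaving it, and the cycle is connected.
  A witness of conditional directedness fixes one traversal T, and any sub-assignment of a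
  common selector set that orients a ci-arc forces T on that arc. In case (a) T agrees with
  the hypothesis' traversal on a directed edge, hence everywhere, so one of the two ci-arcs
  would be traversed against itself; in case (b) the traversal given for the restriction of
  the witness agrees with T on one ci-arc and disagrees on the other.\<close>

lemma traversal_edge:
  assumes "is_traversal A T" and "e \<in> A"
  shows "ends e = {fst (T e), snd (T e)}" and "fst (T e) \<noteq> snd (T e)"
  using assms unfolding is_traversal_def by force+

lemma traversal_swap: "is_traversal A T \<Longrightarrow> is_traversal A (prod.swap \<circ> T)"
  unfolding is_traversal_def by (auto simp: insert_commute)

lemma traversal_eq_if_share_end:
  assumes "is_traversal A T" and "is_traversal A T'" and "f \<in> A"
    and "fst (T f) = fst (T' f) \<or> snd (T f) = snd (T' f)"
  shows "T f = T' f"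
  using traversal_edge[OF assms(1,3)] traversal_edge[OF assms(2,3)] assms(4)
  by (metis doubleton_eq_iff prod_eqI)

lemma simple_cycle_incident_edges:
  assumes "simple_cycle A" and "e \<in> A" and "f \<in> A" and "e \<noteq> f"
    and "v \<in> ends e" and "v \<in> ends f"
  shows "{g \<in> A. v \<in> ends g} = {e, f}"
proof (rule card_subset_eq[symmetric])
  have "v \<in> verts A" using assms(2,5) unfolding verts_def by auto
  then show "card {e, f} = card {g \<in> A. v \<in> ends g}"
    using assms(1,4) unfolding simple_cycle_def by auto
qed (use assms in \<open>auto simp: simple_cycle_def\<close>)

lemma traversal_leaves_where_entered:
  assumes "simple_cycle A" and "is_traversal A T"
    and "e \<in> A" and "f \<in> A" and "e \<noteq> f" and "snd (T e) \<in> ends f"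
  shows "fst (T f) = snd (T e)"
proof -
  let ?v = "snd (T e)"
  have "?v \<in> verts A" using assms(3) traversal_edge[OF assms(2,3)] unfolding verts_def by blast
  then have "card {g \<in> A. fst (T g) = ?v} = 1" using assms(2) unfolding is_traversal_def by blast
  then obtain g where g: "g \<in> A" "fst (T g) = ?v"
    by (metis (mono_tags, lifting) card_1_singletonE mem_Collect_eq singletonI)
  have "g \<in> {e, f}"
    using simple_cycle_incident_edges[OF assms(1,3,4,5) _ assms(6)] g
      traversal_edge[OF assms(2,3)] traversal_edge[OF assms(2) g(1)] by auto
  moreover have "g \<noteq> e" using g(2) traversal_edge(2)[OF assms(2,3)] by auto
  ultimately show ?thesis using g(2) by auto
qed

lemma traversal_eq_at_shared_vertex:
  assumes "simple_cycle A" and "is_traversal A T" and "is_traversal A T'"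
    and "e \<in> A" and "f \<in> A" and "T e = T' e" and "v \<in> ends e" and "v \<in> ends f"
  shows "T f = T' f"
proof (cases "e = f")
  case False
  have "v = fst (T e) \<or> v = snd (T e)" using traversal_edge(1)[OF assms(2,4)] assms(7) by auto
  then show ?thesis
  proof
    assume "v = snd (T e)"
    then show ?thesis
      using traversal_leaves_where_entered[OF assms(1,2,4,5) False]
        traversal_leaves_where_entered[OF assms(1,3,4,5) False] assms(6,8)
        traversal_eq_if_share_end[OF assms(2,3,5)] by metis
  next
    \<comment> \<open>the reversed traversals leave v where the original ones enter it\<close>
    assume "v = fst (T e)"
    then show ?thesis
      using traversal_leaves_where_entered[OF assms(1) traversal_swap[OF assms(2)] assms(4,5) False]
        traversal_leaves_where_entered[OF assms(1) traversal_swap[OF assms(3)] assms(4,5) False]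
        assms(6,8) traversal_eq_if_share_end[OF assms(2,3,5)]
      by (metis comp_apply fst_swap snd_swap)
  qed
qed (use assms(6) in simp)

lemma traversal_eq_if_eq_on_edge:
  assumes "simple_cycle A" and "is_traversal A T" and "is_traversal A T'"
    and "e \<in> A" and "T e = T' e" and "f \<in> A"
  shows "T f = T' f"
proof -
  define agree_at where "agree_at v \<longleftrightarrow> (\<forall>g\<in>A. v \<in> ends g \<longrightarrow> T g = T' g)" for v
  have agree_at_ends: "agree_at v" if "g \<in> A" "T g = T' g" "v \<in> ends g" for g v
    using traversal_eq_at_shared_vertex[OF assms(1-3) that(1)] that unfolding agree_at_def by blast
  obtain x where x: "x \<in> ends e" using traversal_edge(1)[OF assms(2,4)] by blast
  obtain a where a: "a \<in> ends f" using traversal_edge(1)[OF assms(2,6)] by blast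
  have "(x, a) \<in> (adj A)\<^sup>*"
    using assms(1,4,6) x a unfolding simple_cycle_def verts_def by blast
  then have "agree_at a"
  proof (induction rule: rtrancl_induct)
    case base
    show ?case using agree_at_ends[OF assms(4,5) x] .
  next
    case (step u w)
    then obtain g where "g \<in> A" "u \<in> ends g" "w \<in> ends g" unfolding adj_def by auto
    with step.IH show ?case using agree_at_ends unfolding agree_at_def by blast
  qed
  then show ?thesis using assms(6) a unfolding agree_at_def by blast
qed

lemma cond_directed_witness:
  assumes "cond_directed N A" and "U \<subseteq> selA N A"
  obtains w T where "is_assignment N U w" and "is_traversal A T" and "agrees_dir A T"
    and "\<And>g d. Und g \<in> A \<Longrightarrow> U \<subseteq> sel N g \<Longrightarrow> orients N g w d \<Longrightarrow> T (Und g) = d"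
proof -
  obtain u T where u: "is_assignment N (selA N A) u"
    and T: "is_traversal A T" "agrees_dir A T"
    and row: "\<And>g. Und g \<in> A \<Longrightarrow> cit N g (u |` sel N g) = Some (T (Und g))"
    using assms(1) unfolding cond_directed_def by blast
  have "is_assignment N U (u |` U)"
    using u assms(2) unfolding is_assignment_def by auto
  moreover have "T (Und g) = d"
    if "Und g \<in> A" "U \<subseteq> sel N g" "orients N g (u |` U) d" for g d
  proof -
    have "u |` U \<subseteq>\<^sub>m u |` sel N g"
      using that(2) by (auto simp: map_le_def restrict_map_def)
    then show ?thesis using row[OF that(1)] that(3) unfolding orients_def by blast
  qed
  ultimately show thesis using that T by blast
qed

theorem lemma6:
  assumes "tcp_net N"
    and "semi_directed_cycle N A"
    and "Und gi \<in> A" and "Und gj \<in> A" and "gi \<noteq> gj"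
    and "((\<exists>x y. Dir x y \<in> A) \<and>
            (\<exists>T. is_traversal A T \<and> agrees_dir A T \<and>
               (\<forall>w. is_assignment N (sel N gi \<inter> sel N gj) w \<longrightarrow>
                    orients N gi w (prod.swap (T (Und gi)))
                  \<or> orients N gj w (prod.swap (T (Und gj))))))
       \<or> ((\<forall>e\<in>A. \<exists>g. e = Und g) \<and>
            (\<forall>w. is_assignment N (sel N gi \<inter> sel N gj) w \<longrightarrow>
               (\<exists>T. is_traversal A T \<and>
                  orients N gi w (T (Und gi)) \<and> orients N gj w (prod.swap (T (Und gj))))))"
  shows "cond_acyclic N A"
  unfolding cond_acyclic_def
proof
  assume "cond_directed N A"
  moreover have "sel N gi \<inter> sel N gj \<subseteq> selA N A" using assms(3) unfolding selA_def by blast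
  ultimately obtain w T' where w: "is_assignment N (sel N gi \<inter> sel N gj) w"
    and T': "is_traversal A T'" "agrees_dir A T'"
    and forced: "\<And>g d. g \<in> {gi, gj} \<Longrightarrow> orients N g w d \<Longrightarrow> T' (Und g) = d"
    using cond_directed_witness assms(3,4) by (metis Int_lower1 Int_lower2 insertE singletonD)
  have sc: "simple_cycle A" using assms(2) unfolding semi_directed_cycle_def by blast
  have not_reversed: "T' (Und g) \<noteq> prod.swap (T' (Und g))" if "Und g \<in> A" for g
    using traversal_edge(2)[OF T'(1) that] by (cases "T' (Und g)") auto
  from assms(6) show False
  proof (elim disjE conjE exE)
    fix x y T assume "Dir x y \<in> A" and T: "is_traversal A T" "agrees_dir A T"
      and "\<forall>w. is_assignment N (sel N gi \<inter> sel N gj) w \<longrightarrow>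
             orients N gi w (prod.swap (T (Und gi))) \<or> orients N gj w (prod.swap (T (Und gj)))"
    moreover have "T (Dir x y) = T' (Dir x y)"
      using T(2) T'(2) \<open>Dir x y \<in> A\<close> unfolding agrees_dir_def by simp
    ultimately show False
      using traversal_eq_if_eq_on_edge[OF sc T(1) T'(1)] w forced not_reversed assms(3,4)
      by (metis insertI1 insert_commute)
  next
    assume "\<forall>w. is_assignment N (sel N gi \<inter> sel N gj) w \<longrightarrow>
      (\<exists>T. is_traversal A T \<and> orients N gi w (T (Und gi)) \<and> orients N gj w (prod.swap (T (Und gj))))"
    then obtain T where T: "is_traversal A T" and "orients N gi w (T (Und gi))"
      and "orients N gj w (prod.swap (T (Und gj)))" using w by blast
    then have "T (Und gi) = T' (Und gi)" and "T' (Und gj) = prod.swap (T (Und gj))"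
      using forced by auto
    then show False
      using traversal_eq_if_eq_on_edge[OF sc T T'(1) assms(3) _ assms(4)] not_reversed[OF assms(4)] by simp
  qed
qed

end
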